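(* The Lack model structure on $2\mathrm{Cat}$ is right-induced along $\mathbb{H}\colon 2\mathrm{Cat}\to\mathrm{DblCat}$ (from the adjunction $L\dashv\mathbb{H}$) from the model structure on $\mathrm{DblCat}$ right-induced along $(\mathbf{H},\mathcal{V})$ from two copies of the Lack model structure. That is, a 2-functor $F\colon\mathcal{A}\to\mathcal{B}$ is a biequivalence (resp.\ Lack fibration) if and only if $\mathbb{H}F\colon\mathbb{H}\mathcal{A}\to\mathbb{H}\mathcal{B}$ is a weak equivalence (resp.\ fibration) in $\mathrm{DblCat}$, i.e.\ a double biequivalence (resp.\ double fibration).
   Context: $\mathbb{H}\colon 2\mathrm{Cat}\to\mathrm{DblCat}$ sends a 2-category to the double category with the same objects, its morphisms as horizontal morphisms, only identity vertical morphisms, and its 2-cells as squares; it has a left adjoint $L$. $\mathbf{H}$ sends a double category to its underlying horizontal 2-category (objects, horizontal morphisms, squares with identity vertical boundaries as 2-cells). $\mathcal{V}\mathbb{A}$ is the 2-category with vertical morphisms as objects, squares as morphisms, and as 2-cells from $\alpha\colon(u\,{}^{a}_{b}\,v)$ to $\beta\colon(u\,{}^{c}_{d}\,v)$ pairs of squares with identity vertical boundaries $\sigma_0\colon a\Rightarrow c$, $\sigma_1\colon b\Rightarrow d$ with $\sigma_0$ on top of $\beta$ equal to $\alpha$ on top of $\sigma_1$. A biequivalence is a 2-functor essentially surjective up to equivalence on objects, essentially full up to invertible 2-cell on morphisms and fully faithful on 2-cells; a Lack fibration is a 2-functor $G$ for which equivalences $b\colon B\to GC$ lift to equivalences $a$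 with $Ga=b$, and invertible 2-cells $\beta\colon b\cong Gc$ lift to invertible 2-cells $\alpha\colon a\cong c$ with $G\alpha=\beta$. The Lack model structure on $2\mathrm{Cat}$ has these as weak equivalences and fibrations. The model structure on $\mathrm{DblCat}$ has as weak equivalences (resp.\ fibrations) the double functors $F$ with $\mathbf{H}F$ and $\mathcal{V}F$ biequivalences (resp.\ Lack fibrations); these are called double biequivalences (resp.\ double fibrations). *)

theory Defs
  imports Main
begin

section \<open>Strict 2-categories\<close>

text \<open>A strict 2-category given by carrier sets of objects, 1-cells and 2-cells
 together with (total) operations that are meaningful on composable data.
 Conventions: comp g f = g \<circ> f (defined when cod f = dom g);
 vcomp \<beta> \<alpha> = vertical composite \<alpha> then \<beta> (defined when tgt2 \<alpha> = src2 \<beta>);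
 hcomp \<beta> \<alpha> = horizontal composite, \<alpha> : f \<Rightarrow> g : x \<rightarrow> y, \<beta> : h \<Rightarrow> k : y \<rightarrow> z,
 giving h\<circ>f \<Rightarrow> k\<circ>g.\<close>

record ('o,'m,'c) twocat =
  Ob :: "'o set"
  Hom :: "'m set"
  Cell :: "'c set"
  hdom :: "'m \<Rightarrow> 'o"
  hcod :: "'m \<Rightarrow> 'o"
  comp :: "'m \<Rightarrow> 'm \<Rightarrow> 'm"
  idm :: "'o \<Rightarrow> 'm"
  src2 :: "'c \<Rightarrow> 'm"
  tgt2 :: "'c \<Rightarrow> 'm"
  vcomp :: "'c \<Rightarrow> 'c \<Rightarrow> 'c"
  hcomp :: "'c \<Rightarrow> 'c \<Rightarrow> 'c"
  id2 :: "'m \<Rightarrow> 'c"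

definition is_2cat :: "('o,'m,'c) twocat \<Rightarrow> bool" where
  "is_2cat C \<longleftrightarrow>
     (\<forall>f\<in>Hom C. hdom C f \<in> Ob C \<and> hcod C f \<in> Ob C)
   \<and> (\<forall>x\<in>Ob C. idm C x \<in> Hom C \<and> hdom C (idm C x) = x \<and> hcod C (idm C x) = x)
   \<and> (\<forall>f\<in>Hom C. \<forall>g\<in>Hom C. hcod C f = hdom C g \<longrightarrow>
        comp C g f \<in> Hom C \<and> hdom C (comp C g f) = hdom C f \<and> hcod C (comp C g f) = hcod C g)
   \<and> (\<forall>f\<in>Hom C. \<forall>g\<in>Hom C. \<forall>h\<in>Hom C. hcod C f = hdom C g \<longrightarrow> hcod C g = hdom C h \<longrightarrow>
        comp C h (comp C g f) = comp C (comp C h g) f)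
   \<and> (\<forall>f\<in>Hom C. comp C (idm C (hcod C f)) f = f \<and> comp C f (idm C (hdom C f)) = f)
   \<and> (\<forall>a\<in>Cell C. src2 C a \<in> Hom C \<and> tgt2 C a \<in> Hom C
        \<and> hdom C (src2 C a) = hdom C (tgt2 C a) \<and> hcod C (src2 C a) = hcod C (tgt2 C a))
   \<and> (\<forall>f\<in>Hom C. id2 C f \<in> Cell C \<and> src2 C (id2 C f) = f \<and> tgt2 C (id2 C f) = f)
   \<and> (\<forall>a\<in>Cell C. \<forall>b\<in>Cell C. tgt2 C a = src2 C b \<longrightarrow>
        vcomp C b a \<in> Cell C \<and> src2 C (vcomp C b a) = src2 C a \<and> tgt2 C (vcomp C b a) = tgt2 C b)
   \<and> (\<forall>a\<in>Cell C. \<forall>b\<in>Cell C. \<forall>c\<in>Cell C. tgt2 C a = src2 C b \<longrightarrow> tgt2 C b = src2 C c \<longrightarrow>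
        vcomp C c (vcomp C b a) = vcomp C (vcomp C c b) a)
   \<and> (\<forall>a\<in>Cell C. vcomp C (id2 C (tgt2 C a)) a = a \<and> vcomp C a (id2 C (src2 C a)) = a)
   \<and> (\<forall>a\<in>Cell C. \<forall>b\<in>Cell C. hcod C (src2 C a) = hdom C (src2 C b) \<longrightarrow>
        hcomp C b a \<in> Cell C \<and> src2 C (hcomp C b a) = comp C (src2 C b) (src2 C a)
        \<and> tgt2 C (hcomp C b a) = comp C (tgt2 C b) (tgt2 C a))
   \<and> (\<forall>a\<in>Cell C. \<forall>b\<in>Cell C. \<forall>c\<in>Cell C. hcod C (src2 C a) = hdom C (src2 C b) \<longrightarrow>
        hcod C (src2 C b) = hdom C (src2 C c) \<longrightarrow>
        hcomp C c (hcomp C b a) = hcomp C (hcomp C c b) a)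
   \<and> (\<forall>a\<in>Cell C. hcomp C (id2 C (idm C (hcod C (src2 C a)))) a = a
        \<and> hcomp C a (id2 C (idm C (hdom C (src2 C a)))) = a)
   \<and> (\<forall>f\<in>Hom C. \<forall>g\<in>Hom C. hcod C f = hdom C g \<longrightarrow>
        hcomp C (id2 C g) (id2 C f) = id2 C (comp C g f))
   \<and> (\<forall>a\<in>Cell C. \<forall>a'\<in>Cell C. \<forall>b\<in>Cell C. \<forall>b'\<in>Cell C.
        tgt2 C a = src2 C a' \<longrightarrow> tgt2 C b = src2 C b' \<longrightarrow> hcod C (src2 C a) = hdom C (src2 C b) \<longrightarrow>
        vcomp C (hcomp C b' a') (hcomp C b a) = hcomp C (vcomp C b' b) (vcomp C a' a))"

record ('o,'m,'c,'p,'n,'d) twofun =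
  Fo :: "'o \<Rightarrow> 'p"
  Fm :: "'m \<Rightarrow> 'n"
  Fc :: "'c \<Rightarrow> 'd"

definition is_2functor ::
  "('o,'m,'c) twocat \<Rightarrow> ('p,'n,'d) twocat \<Rightarrow> ('o,'m,'c,'p,'n,'d) twofun \<Rightarrow> bool" where
  "is_2functor A B F \<longleftrightarrow>
     (\<forall>x\<in>Ob A. Fo F x \<in> Ob B \<and> Fm F (idm A x) = idm B (Fo F x))
   \<and> (\<forall>f\<in>Hom A. Fm F f \<in> Hom B \<and> hdom B (Fm F f) = Fo F (hdom A f)
        \<and> hcod B (Fm F f) = Fo F (hcod A f) \<and> Fc F (id2 A f) = id2 B (Fm F f))
   \<and> (\<forall>f\<in>Hom A. \<forall>g\<in>Hom A. hcod A f = hdom A g \<longrightarrow> Fm F (comp A g f) = comp B (Fm F g) (Fm F f))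
   \<and> (\<forall>a\<in>Cell A. Fc F a \<in> Cell B \<and> src2 B (Fc F a) = Fm F (src2 A a)
        \<and> tgt2 B (Fc F a) = Fm F (tgt2 A a))
   \<and> (\<forall>a\<in>Cell A. \<forall>b\<in>Cell A. tgt2 A a = src2 A b \<longrightarrow>
        Fc F (vcomp A b a) = vcomp B (Fc F b) (Fc F a))
   \<and> (\<forall>a\<in>Cell A. \<forall>b\<in>Cell A. hcod A (src2 A a) = hdom A (src2 A b) \<longrightarrow>
        Fc F (hcomp A b a) = hcomp B (Fc F b) (Fc F a))"

definition invertible2 :: "('o,'m,'c) twocat \<Rightarrow> 'c \<Rightarrow> bool" where
  "invertible2 C a \<longleftrightarrow> a \<in> Cell C \<and>
     (\<exists>b\<in>Cell C. src2 C b = tgt2 C a \<and> tgt2 C b = src2 C a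
        \<and> vcomp C b a = id2 C (src2 C a) \<and> vcomp C a b = id2 C (tgt2 C a))"

definition iso2 :: "('o,'m,'c) twocat \<Rightarrow> 'c \<Rightarrow> 'm \<Rightarrow> 'm \<Rightarrow> bool" where
  "iso2 C a f g \<longleftrightarrow> invertible2 C a \<and> src2 C a = f \<and> tgt2 C a = g"

definition equivalence :: "('o,'m,'c) twocat \<Rightarrow> 'm \<Rightarrow> bool" where
  "equivalence C e \<longleftrightarrow> e \<in> Hom C \<and>
     (\<exists>e'\<in>Hom C. hdom C e' = hcod C e \<and> hcod C e' = hdom C e
        \<and> (\<exists>u. iso2 C u (idm C (hdom C e)) (comp C e' e))
        \<and> (\<exists>v. iso2 C v (comp C e e') (idm C (hcod C e))))"

definition biequivalence ::
  "('o,'m,'c) twocat \<Rightarrow> ('p,'n,'d) twocat \<Rightarrow> ('o,'m,'c,'p,'n,'d) twofun \<Rightarrow> bool" where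
  "biequivalence A B F \<longleftrightarrow>
     \<comment> \<open>essentially surjective up to equivalence on objects\<close>
     (\<forall>y\<in>Ob B. \<exists>x\<in>Ob A. \<exists>e. equivalence B e \<and> hdom B e = Fo F x \<and> hcod B e = y)
     \<comment> \<open>essentially full up to invertible 2-cell on morphisms\<close>
   \<and> (\<forall>x\<in>Ob A. \<forall>x'\<in>Ob A. \<forall>g\<in>Hom B. hdom B g = Fo F x \<longrightarrow> hcod B g = Fo F x' \<longrightarrow>
        (\<exists>f\<in>Hom A. hdom A f = x \<and> hcod A f = x' \<and> (\<exists>b. iso2 B b (Fm F f) g)))
     \<comment> \<open>fully faithful on 2-cells\<close>
   \<and> (\<forall>f\<in>Hom A. \<forall>f'\<in>Hom A. hdom A f = hdom A f' \<longrightarrow> hcod A f = hcod A f' \<longrightarrow>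
        bij_betw (Fc F) {a\<in>Cell A. src2 A a = f \<and> tgt2 A a = f'}
                        {b\<in>Cell B. src2 B b = Fm F f \<and> tgt2 B b = Fm F f'})"

definition lack_fibration ::
  "('o,'m,'c) twocat \<Rightarrow> ('p,'n,'d) twocat \<Rightarrow> ('o,'m,'c,'p,'n,'d) twofun \<Rightarrow> bool" where
  "lack_fibration A B G \<longleftrightarrow>
     (\<forall>z\<in>Ob A. \<forall>b. equivalence B b \<longrightarrow> hcod B b = Fo G z \<longrightarrow>
        (\<exists>a. equivalence A a \<and> hcod A a = z \<and> Fm G a = b))
   \<and> (\<forall>c\<in>Hom A. \<forall>\<beta>. invertible2 B \<beta> \<longrightarrow> tgt2 B \<beta> = Fm G c \<longrightarrow>
        (\<exists>\<alpha>. invertible2 A \<alpha> \<and> tgt2 A \<alpha> = c \<and> Fc G \<alpha> = \<beta>))"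

section \<open>Double categories\<close>

text \<open>Squares \<alpha> have boundaries top (horizontal), bot (horizontal), left (vertical),
 right (vertical).  sqh \<beta> \<alpha>: horizontal composite, \<alpha> to the left of \<beta>
 (right \<alpha> = left \<beta>); sqv \<beta> \<alpha>: vertical composite, \<alpha> on top of \<beta> (bot \<alpha> = top \<beta>).
 hidsq u: identity square for horizontal composition on a vertical morphism u;
 vidsq f: identity square for vertical composition on a horizontal morphism f.\<close>

record ('o,'h,'v,'s) dblcat =
  DOb :: "'o set"
  HMor :: "'h set"
  VMor :: "'v set"
  Sq :: "'s set"
  hsrc :: "'h \<Rightarrow> 'o"
  htgt :: "'h \<Rightarrow> 'o"
  hcompM :: "'h \<Rightarrow> 'h \<Rightarrow> 'h"
  hid :: "'o \<Rightarrow> 'h"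
  vsrc :: "'v \<Rightarrow> 'o"
  vtgt :: "'v \<Rightarrow> 'o"
  vcompM :: "'v \<Rightarrow> 'v \<Rightarrow> 'v"
  vid :: "'o \<Rightarrow> 'v"
  top :: "'s \<Rightarrow> 'h"
  bot :: "'s \<Rightarrow> 'h"
  lft :: "'s \<Rightarrow> 'v"
  rgt :: "'s \<Rightarrow> 'v"
  sqh :: "'s \<Rightarrow> 's \<Rightarrow> 's"
  sqv :: "'s \<Rightarrow> 's \<Rightarrow> 's"
  hidsq :: "'v \<Rightarrow> 's"
  vidsq :: "'h \<Rightarrow> 's"

record ('o,'h,'v,'s,'p,'k,'w,'t) dblfun =
  DFo :: "'o \<Rightarrow> 'p"
  DFh :: "'h \<Rightarrow> 'k"
  DFv :: "'v \<Rightarrow> 'w"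
  DFs :: "'s \<Rightarrow> 't"

subsection \<open>The underlying horizontal 2-category \<open>\<^bold>H\<close>\<close>

definition HH :: "('o,'h,'v,'s) dblcat \<Rightarrow> ('o,'h,'s) twocat" where
  "HH D = \<lparr> Ob = DOb D, Hom = HMor D,
     Cell = {a\<in>Sq D. lft D a = vid D (hsrc D (top D a)) \<and> rgt D a = vid D (htgt D (top D a))},
     hdom = hsrc D, hcod = htgt D, comp = hcompM D, idm = hid D,
     src2 = top D, tgt2 = bot D, vcomp = sqv D, hcomp = sqh D, id2 = vidsq D \<rparr>"

definition HHf :: "('o,'h,'v,'s,'p,'k,'w,'t) dblfun \<Rightarrow> ('o,'h,'s,'p,'k,'t) twofun" where
  "HHf F = \<lparr> Fo = DFo F, Fm = DFh F, Fc = DFs F \<rparr>"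

subsection \<open>The 2-category \<open>\<V>\<close> of vertical morphisms and squares\<close>

text \<open>A 2-cell from \<alpha> to \<beta> is represented as the quadruple (\<alpha>, \<sigma>0, \<sigma>1, \<beta>).\<close>

definition VV :: "('o,'h,'v,'s) dblcat \<Rightarrow> ('v,'s,'s\<times>'s\<times>'s\<times>'s) twocat" where
  "VV D = \<lparr> Ob = VMor D, Hom = Sq D,
     Cell = {(a, s0, s1, b). a \<in> Sq D \<and> b \<in> Sq D \<and> lft D a = lft D b \<and> rgt D a = rgt D b
              \<and> s0 \<in> Sq D \<and> s1 \<in> Sq D
              \<and> lft D s0 = vid D (hsrc D (top D s0)) \<and> rgt D s0 = vid D (htgt D (top D s0))
              \<and> lft D s1 = vid D (hsrc D (top D s1)) \<and> rgt D s1 = vid D (htgt D (top D s1))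
              \<and> top D s0 = top D a \<and> bot D s0 = top D b
              \<and> top D s1 = bot D a \<and> bot D s1 = bot D b
              \<and> sqv D b s0 = sqv D s1 a},
     hdom = lft D, hcod = rgt D, comp = sqh D, idm = hidsq D,
     src2 = (\<lambda>(a, s0, s1, b). a), tgt2 = (\<lambda>(a, s0, s1, b). b),
     vcomp = (\<lambda>(b, t0, t1, c) (a, s0, s1, b'). (a, sqv D t0 s0, sqv D t1 s1, c)),
     hcomp = (\<lambda>(b, t0, t1, b') (a, s0, s1, a'). (sqh D b a, sqh D t0 s0, sqh D t1 s1, sqh D b' a')),
     id2 = (\<lambda>a. (a, vidsq D (top D a), vidsq D (bot D a), a)) \<rparr>"

definition VVf :: "('o,'h,'v,'s,'p,'k,'w,'t) dblfun
                    \<Rightarrow> ('v,'s,'s\<times>'s\<times>'s\<times>'s,'w,'t,'t\<times>'t\<times>'t\<times>'t) twofun" where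
  "VVf F = \<lparr> Fo = DFv F, Fm = DFs F,
     Fc = (\<lambda>(a, s0, s1, b). (DFs F a, DFs F s0, DFs F s1, DFs F b)) \<rparr>"

definition double_biequivalence ::
  "('o,'h,'v,'s) dblcat \<Rightarrow> ('p,'k,'w,'t) dblcat \<Rightarrow> ('o,'h,'v,'s,'p,'k,'w,'t) dblfun \<Rightarrow> bool" where
  "double_biequivalence A B F \<longleftrightarrow>
     biequivalence (HH A) (HH B) (HHf F) \<and> biequivalence (VV A) (VV B) (VVf F)"

definition double_fibration ::
  "('o,'h,'v,'s) dblcat \<Rightarrow> ('p,'k,'w,'t) dblcat \<Rightarrow> ('o,'h,'v,'s,'p,'k,'w,'t) dblfun \<Rightarrow> bool" where
  "double_fibration A B F \<longleftrightarrow>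
     lack_fibration (HH A) (HH B) (HHf F) \<and> lack_fibration (VV A) (VV B) (VVf F)"

section \<open>The functor \<open>\<bbbH>\<close> : 2Cat \<rightarrow> DblCat\<close>

text \<open>Vertical morphisms of \<open>\<bbbH>\<close>A are only identities; the identity at x is represented by x.\<close>

definition HD :: "('o,'m,'c) twocat \<Rightarrow> ('o,'m,'o,'c) dblcat" where
  "HD A = \<lparr> DOb = Ob A, HMor = Hom A, VMor = Ob A, Sq = Cell A,
     hsrc = hdom A, htgt = hcod A, hcompM = comp A, hid = idm A,
     vsrc = (\<lambda>x. x), vtgt = (\<lambda>x. x), vcompM = (\<lambda>y x. x), vid = (\<lambda>x. x),
     top = src2 A, bot = tgt2 A,
     lft = (\<lambda>a. hdom A (src2 A a)), rgt = (\<lambda>a. hcod A (src2 A a)),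
     sqh = hcomp A, sqv = vcomp A,
     hidsq = (\<lambda>x. id2 A (idm A x)), vidsq = id2 A \<rparr>"

definition HDf :: "('o,'m,'c,'p,'n,'d) twofun \<Rightarrow> ('o,'m,'o,'c,'p,'n,'p,'d) dblfun" where
  "HDf F = \<lparr> DFo = Fo F, DFh = Fm F, DFv = Fo F, DFs = Fc F \<rparr>"

end

theory Submission
  imports Defs
begin

text \<open>The horizontal 2-category of \<open>\<bbbH>A\<close> is \<open>A\<close> itself, so it suffices that \<open>\<V>\<bbbH>F\<close> is a
  biequivalence (a Lack fibration) whenever \<open>F\<close> is.  The morphisms of \<open>\<V>\<bbbH>A\<close> are the 2-cells
  of \<open>A\<close>, and its 2-cells are commutative squares of 2-cells, invertible exactly when both
  components are.  The crux is that the equivalences of \<open>\<V>\<bbbH>A\<close> are precisely the invertible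
  2-cells \<open>\<alpha> : g \<Rightarrow> g'\<close> with \<open>g\<close> an equivalence.  For the nontrivial direction let
  \<open>\<epsilon> : h \<Rightarrow> h'\<close> be a pseudo-inverse of \<open>\<alpha>\<close> in \<open>\<V>\<bbbH>A\<close>: the invertible composite \<open>\<epsilon> * \<alpha>\<close>
  factors both as \<open>(\<epsilon> * g') \<cdot> (h * \<alpha>)\<close> and as \<open>(h' * \<alpha>) \<cdot> (\<epsilon> * g)\<close>, so \<open>h * \<alpha>\<close> has a left and
  \<open>h' * \<alpha>\<close> a right inverse, and these pass to \<open>\<alpha>\<close> because whiskering by \<open>h\<close> (resp. \<open>h'\<close>) is
  undone up to the invertible 2-cell \<open>g h \<cong> 1\<close> (resp. \<open>g' h' \<cong> 1\<close>).  With this, equivalences,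
  invertible 2-cells and 2-cells of \<open>\<V>\<bbbH>B\<close> lift componentwise along \<open>F\<close>.\<close>

locale two_category =
  fixes C :: "('o,'m,'c) twocat"
  assumes hdom_in_Ob [simp]: "f \<in> Hom C \<Longrightarrow> hdom C f \<in> Ob C"
    and hcod_in_Ob [simp]: "f \<in> Hom C \<Longrightarrow> hcod C f \<in> Ob C"
    and idm_in_Hom [simp]: "x \<in> Ob C \<Longrightarrow> idm C x \<in> Hom C"
    and hdom_idm [simp]: "x \<in> Ob C \<Longrightarrow> hdom C (idm C x) = x"
    and hcod_idm [simp]: "x \<in> Ob C \<Longrightarrow> hcod C (idm C x) = x"
    and comp_in_Hom [simp]: "\<lbrakk>f \<in> Hom C; g \<in> Hom C; hcod C f = hdom C g\<rbrakk> \<Longrightarrow> comp C g f \<in> Hom C"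
    and hdom_comp [simp]: "\<lbrakk>f \<in> Hom C; g \<in> Hom C; hcod C f = hdom C g\<rbrakk> \<Longrightarrow> hdom C (comp C g f) = hdom C f"
    and hcod_comp [simp]: "\<lbrakk>f \<in> Hom C; g \<in> Hom C; hcod C f = hdom C g\<rbrakk> \<Longrightarrow> hcod C (comp C g f) = hcod C g"
    and comp_idm_left [simp]: "\<lbrakk>f \<in> Hom C; hcod C f = y\<rbrakk> \<Longrightarrow> comp C (idm C y) f = f"
    and comp_idm_right [simp]: "\<lbrakk>f \<in> Hom C; hdom C f = x\<rbrakk> \<Longrightarrow> comp C f (idm C x) = f"
    and src2_in_Hom [simp]: "a \<in> Cell C \<Longrightarrow> src2 C a \<in> Hom C"
    and tgt2_in_Hom [simp]: "a \<in> Cell C \<Longrightarrow> tgt2 C a \<in> Hom C"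
    and hdom_tgt2 [simp]: "a \<in> Cell C \<Longrightarrow> hdom C (tgt2 C a) = hdom C (src2 C a)"
    and hcod_tgt2 [simp]: "a \<in> Cell C \<Longrightarrow> hcod C (tgt2 C a) = hcod C (src2 C a)"
    and id2_in_Cell [simp]: "f \<in> Hom C \<Longrightarrow> id2 C f \<in> Cell C"
    and src2_id2 [simp]: "f \<in> Hom C \<Longrightarrow> src2 C (id2 C f) = f"
    and tgt2_id2 [simp]: "f \<in> Hom C \<Longrightarrow> tgt2 C (id2 C f) = f"
    and vcomp_in_Cell [simp]: "\<lbrakk>a \<in> Cell C; b \<in> Cell C; tgt2 C a = src2 C b\<rbrakk> \<Longrightarrow> vcomp C b a \<in> Cell C"
    and src2_vcomp [simp]: "\<lbrakk>a \<in> Cell C; b \<in> Cell C; tgt2 C a = src2 C b\<rbrakk> \<Longrightarrow> src2 C (vcomp C b a) = src2 C a"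
    and tgt2_vcomp [simp]: "\<lbrakk>a \<in> Cell C; b \<in> Cell C; tgt2 C a = src2 C b\<rbrakk> \<Longrightarrow> tgt2 C (vcomp C b a) = tgt2 C b"
    and vcomp_assoc: "\<lbrakk>a \<in> Cell C; b \<in> Cell C; c \<in> Cell C; tgt2 C a = src2 C b; tgt2 C b = src2 C c\<rbrakk>
      \<Longrightarrow> vcomp C c (vcomp C b a) = vcomp C (vcomp C c b) a"
    and vcomp_id2_left [simp]: "\<lbrakk>a \<in> Cell C; tgt2 C a = f\<rbrakk> \<Longrightarrow> vcomp C (id2 C f) a = a"
    and vcomp_id2_right [simp]: "\<lbrakk>a \<in> Cell C; src2 C a = f\<rbrakk> \<Longrightarrow> vcomp C a (id2 C f) = a"
    and hcomp_in_Cell [simp]: "\<lbrakk>a \<in> Cell C; b \<in> Cell C; hcod C (src2 C a) = hdom C (src2 C b)\<rbrakk>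
      \<Longrightarrow> hcomp C b a \<in> Cell C"
    and src2_hcomp [simp]: "\<lbrakk>a \<in> Cell C; b \<in> Cell C; hcod C (src2 C a) = hdom C (src2 C b)\<rbrakk>
      \<Longrightarrow> src2 C (hcomp C b a) = comp C (src2 C b) (src2 C a)"
    and tgt2_hcomp [simp]: "\<lbrakk>a \<in> Cell C; b \<in> Cell C; hcod C (src2 C a) = hdom C (src2 C b)\<rbrakk>
      \<Longrightarrow> tgt2 C (hcomp C b a) = comp C (tgt2 C b) (tgt2 C a)"
    and hcomp_assoc: "\<lbrakk>a \<in> Cell C; b \<in> Cell C; c \<in> Cell C;
      hcod C (src2 C a) = hdom C (src2 C b); hcod C (src2 C b) = hdom C (src2 C c)\<rbrakk>
      \<Longrightarrow> hcomp C c (hcomp C b a) = hcomp C (hcomp C c b) a"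
    and hcomp_idm_left [simp]: "\<lbrakk>a \<in> Cell C; hcod C (src2 C a) = y\<rbrakk> \<Longrightarrow> hcomp C (id2 C (idm C y)) a = a"
    and hcomp_idm_right [simp]: "\<lbrakk>a \<in> Cell C; hdom C (src2 C a) = x\<rbrakk> \<Longrightarrow> hcomp C a (id2 C (idm C x)) = a"
    and hcomp_id2 [simp]: "\<lbrakk>f \<in> Hom C; g \<in> Hom C; hcod C f = hdom C g\<rbrakk>
      \<Longrightarrow> hcomp C (id2 C g) (id2 C f) = id2 C (comp C g f)"
    and interchange: "\<lbrakk>a \<in> Cell C; a' \<in> Cell C; b \<in> Cell C; b' \<in> Cell C;
      tgt2 C a = src2 C a'; tgt2 C b = src2 C b'; hcod C (src2 C a) = hdom C (src2 C b)\<rbrakk>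
      \<Longrightarrow> vcomp C (hcomp C b' a') (hcomp C b a) = hcomp C (vcomp C b' b) (vcomp C a' a)"

lemma two_category_if_is_2cat: "is_2cat C \<Longrightarrow> two_category C"
  unfolding is_2cat_def by unfold_locales (simp_all, metis+)

section \<open>Invertible 2-cells\<close>

definition inv2 :: "('o,'m,'c) twocat \<Rightarrow> 'c \<Rightarrow> 'c" where
  "inv2 C a = (SOME b. b \<in> Cell C \<and> src2 C b = tgt2 C a \<and> tgt2 C b = src2 C a
        \<and> vcomp C b a = id2 C (src2 C a) \<and> vcomp C a b = id2 C (tgt2 C a))"

definition left_invertible2 :: "('o,'m,'c) twocat \<Rightarrow> 'c \<Rightarrow> bool" where
  "left_invertible2 C a \<longleftrightarrow> a \<in> Cell C \<and>
     (\<exists>l\<in>Cell C. src2 C l = tgt2 C a \<and> tgt2 C l = src2 C a \<and> vcomp C l a = id2 C (src2 C a))"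

definition right_invertible2 :: "('o,'m,'c) twocat \<Rightarrow> 'c \<Rightarrow> bool" where
  "right_invertible2 C a \<longleftrightarrow> a \<in> Cell C \<and>
     (\<exists>r\<in>Cell C. src2 C r = tgt2 C a \<and> tgt2 C r = src2 C a \<and> vcomp C a r = id2 C (tgt2 C a))"

context two_category
begin

lemma invertible2_in_Cell [simp]: "invertible2 C a \<Longrightarrow> a \<in> Cell C"
  unfolding invertible2_def by blast

lemma invertible2I:
  assumes "a \<in> Cell C" "b \<in> Cell C" "src2 C b = tgt2 C a" "tgt2 C b = src2 C a"
    "vcomp C b a = id2 C (src2 C a)" "vcomp C a b = id2 C (tgt2 C a)"
  shows "invertible2 C a"
  using assms unfolding invertible2_def by blast

lemma
  assumes "invertible2 C a"
  shows inv2_in_Cell [simp]: "inv2 C a \<in> Cell C"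
    and src2_inv2 [simp]: "src2 C (inv2 C a) = tgt2 C a"
    and tgt2_inv2 [simp]: "tgt2 C (inv2 C a) = src2 C a"
    and vcomp_inv2_left [simp]: "vcomp C (inv2 C a) a = id2 C (src2 C a)"
    and vcomp_inv2_right [simp]: "vcomp C a (inv2 C a) = id2 C (tgt2 C a)"
proof -
  from assms obtain b where "b \<in> Cell C \<and> src2 C b = tgt2 C a \<and> tgt2 C b = src2 C a
      \<and> vcomp C b a = id2 C (src2 C a) \<and> vcomp C a b = id2 C (tgt2 C a)"
    unfolding invertible2_def by blast
  then have "inv2 C a \<in> Cell C \<and> src2 C (inv2 C a) = tgt2 C a \<and> tgt2 C (inv2 C a) = src2 C a
      \<and> vcomp C (inv2 C a) a = id2 C (src2 C a) \<and> vcomp C a (inv2 C a) = id2 C (tgt2 C a)"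
    unfolding inv2_def by (rule someI)
  then show "inv2 C a \<in> Cell C" "src2 C (inv2 C a) = tgt2 C a" "tgt2 C (inv2 C a) = src2 C a"
    "vcomp C (inv2 C a) a = id2 C (src2 C a)" "vcomp C a (inv2 C a) = id2 C (tgt2 C a)"
    by blast+
qed

lemma inv2_unique:
  assumes a: "invertible2 C a" and b: "b \<in> Cell C" "src2 C b = tgt2 C a" "vcomp C b a = id2 C (src2 C a)"
  shows "b = inv2 C a"
proof -
  have "b = vcomp C b (vcomp C a (inv2 C a))" using a b by simp
  also have "\<dots> = vcomp C (vcomp C b a) (inv2 C a)" by (rule vcomp_assoc) (use a b in auto)
  also have "\<dots> = inv2 C a" using a b by simp
  finally show ?thesis .
qed

lemma invertible2_inv2 [simp]: "invertible2 C a \<Longrightarrow> invertible2 C (inv2 C a)"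
  by (rule invertible2I[where b=a]) auto

lemma inv2_inv2 [simp]: "invertible2 C a \<Longrightarrow> inv2 C (inv2 C a) = a"
  by (rule inv2_unique[symmetric]) auto

lemma invertible2_id2 [simp]: "f \<in> Hom C \<Longrightarrow> invertible2 C (id2 C f)"
  by (rule invertible2I[where b="id2 C f"]) auto

lemma invertible2_vcomp [simp]:
  assumes a: "invertible2 C a" and b: "invertible2 C b" and ab: "tgt2 C a = src2 C b"
  shows "invertible2 C (vcomp C b a)"
proof (rule invertible2I[where b="vcomp C (inv2 C a) (inv2 C b)"])
  have "vcomp C (vcomp C (inv2 C a) (inv2 C b)) (vcomp C b a)
      = vcomp C (inv2 C a) (vcomp C (inv2 C b) (vcomp C b a))"
    by (rule vcomp_assoc[symmetric]) (use a b ab in auto)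
  also have "\<dots> = vcomp C (inv2 C a) (vcomp C (vcomp C (inv2 C b) b) a)"
    by (subst vcomp_assoc) (use a b ab in auto)
  finally show "vcomp C (vcomp C (inv2 C a) (inv2 C b)) (vcomp C b a) = id2 C (src2 C (vcomp C b a))"
    using a b ab by simp
  have "vcomp C (vcomp C b a) (vcomp C (inv2 C a) (inv2 C b))
      = vcomp C b (vcomp C a (vcomp C (inv2 C a) (inv2 C b)))"
    by (rule vcomp_assoc[symmetric]) (use a b ab in auto)
  also have "\<dots> = vcomp C b (vcomp C (vcomp C a (inv2 C a)) (inv2 C b))"
    by (subst vcomp_assoc) (use a b ab in auto)
  finally show "vcomp C (vcomp C b a) (vcomp C (inv2 C a) (inv2 C b)) = id2 C (tgt2 C (vcomp C b a))"
    using a b ab by simp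
qed (use a b ab in auto)

lemma invertible2_hcomp [simp]:
  assumes a: "invertible2 C a" and b: "invertible2 C b" and ab: "hcod C (src2 C a) = hdom C (src2 C b)"
  shows "invertible2 C (hcomp C b a)"
proof (rule invertible2I[where b="hcomp C (inv2 C b) (inv2 C a)"])
  show "vcomp C (hcomp C (inv2 C b) (inv2 C a)) (hcomp C b a) = id2 C (src2 C (hcomp C b a))"
    using a b ab by (subst interchange) auto
  show "vcomp C (hcomp C b a) (hcomp C (inv2 C b) (inv2 C a)) = id2 C (tgt2 C (hcomp C b a))"
    using a b ab by (subst interchange) auto
qed (use a b ab in auto)

lemma invertible2_iff_left_right:
  "invertible2 C a \<longleftrightarrow> left_invertible2 C a \<and> right_invertible2 C a"
proof
  assume "invertible2 C a"
  then show "left_invertible2 C a \<and> right_invertible2 C a"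
    unfolding left_invertible2_def right_invertible2_def by (auto intro!: bexI[where x="inv2 C a"])
next
  assume "left_invertible2 C a \<and> right_invertible2 C a"
  then obtain l r where a: "a \<in> Cell C"
    and l: "l \<in> Cell C" "src2 C l = tgt2 C a" "tgt2 C l = src2 C a" "vcomp C l a = id2 C (src2 C a)"
    and r: "r \<in> Cell C" "src2 C r = tgt2 C a" "tgt2 C r = src2 C a" "vcomp C a r = id2 C (tgt2 C a)"
    unfolding left_invertible2_def right_invertible2_def by blast
  have "l = vcomp C l (vcomp C a r)" using l r a by simp
  also have "\<dots> = vcomp C (vcomp C l a) r" by (rule vcomp_assoc) (use l r a in auto)
  also have "\<dots> = r" using l r a by simp
  finally show "invertible2 C a"
    by (intro invertible2I[where b=l]) (use a l r in auto)
qed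

lemma left_invertible2_vcomp:
  assumes a: "left_invertible2 C a" and c: "left_invertible2 C c" and ac: "tgt2 C a = src2 C c"
  shows "left_invertible2 C (vcomp C c a)"
proof -
  obtain l m where a: "a \<in> Cell C" and l: "l \<in> Cell C" "src2 C l = tgt2 C a" "tgt2 C l = src2 C a"
      "vcomp C l a = id2 C (src2 C a)"
    and c: "c \<in> Cell C" and m: "m \<in> Cell C" "src2 C m = tgt2 C c" "tgt2 C m = src2 C c"
      "vcomp C m c = id2 C (src2 C c)"
    using a c unfolding left_invertible2_def by blast
  have "vcomp C (vcomp C l m) (vcomp C c a) = vcomp C l (vcomp C m (vcomp C c a))"
    by (rule vcomp_assoc[symmetric]) (use a c ac l m in auto)
  also have "\<dots> = vcomp C l (vcomp C (vcomp C m c) a)"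
    by (subst vcomp_assoc) (use a c ac l m in auto)
  also have "\<dots> = id2 C (src2 C a)" using a c ac l m by simp
  finally show ?thesis unfolding left_invertible2_def
    by (intro conjI bexI[where x="vcomp C l m"]) (use a c ac l m in auto)
qed

lemma right_invertible2_vcomp:
  assumes a: "right_invertible2 C a" and c: "right_invertible2 C c" and ac: "tgt2 C a = src2 C c"
  shows "right_invertible2 C (vcomp C c a)"
proof -
  obtain l m where a: "a \<in> Cell C" and l: "l \<in> Cell C" "src2 C l = tgt2 C a" "tgt2 C l = src2 C a"
      "vcomp C a l = id2 C (tgt2 C a)"
    and c: "c \<in> Cell C" and m: "m \<in> Cell C" "src2 C m = tgt2 C c" "tgt2 C m = src2 C c"
      "vcomp C c m = id2 C (tgt2 C c)"
    using a c unfolding right_invertible2_def by blast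
  have "vcomp C (vcomp C c a) (vcomp C l m) = vcomp C c (vcomp C a (vcomp C l m))"
    by (rule vcomp_assoc[symmetric]) (use a c ac l m in auto)
  also have "\<dots> = vcomp C c (vcomp C (vcomp C a l) m)"
    by (subst vcomp_assoc) (use a c ac l m in auto)
  also have "\<dots> = id2 C (tgt2 C c)" using a c ac l m by simp
  finally show ?thesis unfolding right_invertible2_def
    by (intro conjI bexI[where x="vcomp C l m"]) (use a c ac l m in auto)
qed

lemma left_invertible2_whisker:
  assumes a: "left_invertible2 C a" and k: "k \<in> Hom C" and ak: "hcod C (src2 C a) = hdom C k"
  shows "left_invertible2 C (hcomp C (id2 C k) a)"
proof -
  obtain l where a: "a \<in> Cell C"
    and l: "l \<in> Cell C" "src2 C l = tgt2 C a" "tgt2 C l = src2 C a" "vcomp C l a = id2 C (src2 C a)"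
    using a unfolding left_invertible2_def by blast
  have "vcomp C (hcomp C (id2 C k) l) (hcomp C (id2 C k) a)
      = hcomp C (vcomp C (id2 C k) (id2 C k)) (vcomp C l a)"
    by (rule interchange) (use a k ak l in auto)
  also have "\<dots> = id2 C (comp C k (src2 C a))" using a k ak l by simp
  finally show ?thesis unfolding left_invertible2_def
    by (intro conjI bexI[where x="hcomp C (id2 C k) l"]) (use a k ak l in auto)
qed

lemma right_invertible2_whisker:
  assumes a: "right_invertible2 C a" and k: "k \<in> Hom C" and ak: "hcod C (src2 C a) = hdom C k"
  shows "right_invertible2 C (hcomp C (id2 C k) a)"
proof -
  obtain r where a: "a \<in> Cell C"
    and r: "r \<in> Cell C" "src2 C r = tgt2 C a" "tgt2 C r = src2 C a" "vcomp C a r = id2 C (tgt2 C a)"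
    using a unfolding right_invertible2_def by blast
  have "vcomp C (hcomp C (id2 C k) a) (hcomp C (id2 C k) r)
      = hcomp C (vcomp C (id2 C k) (id2 C k)) (vcomp C a r)"
    by (rule interchange) (use a k ak r in auto)
  also have "\<dots> = id2 C (comp C k (tgt2 C a))" using a k ak r by simp
  finally show ?thesis unfolding right_invertible2_def
    by (intro conjI bexI[where x="hcomp C (id2 C k) r"]) (use a k ak r in auto)
qed

lemma
  assumes a: "a \<in> Cell C" and c: "c \<in> Cell C" and ac: "tgt2 C a = src2 C c"
    and ca: "invertible2 C (vcomp C c a)"
  shows left_invertible2_if_vcomp_invertible2: "left_invertible2 C a"
    and right_invertible2_if_vcomp_invertible2: "right_invertible2 C c"
proof -
  let ?i = "inv2 C (vcomp C c a)"
  have "vcomp C (vcomp C ?i c) a = vcomp C ?i (vcomp C c a)"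
    by (rule vcomp_assoc[symmetric]) (use a c ac ca in auto)
  also have "\<dots> = id2 C (src2 C a)" using a c ac ca by simp
  finally show "left_invertible2 C a" unfolding left_invertible2_def
    by (intro conjI bexI[where x="vcomp C ?i c"]) (use a c ac ca in auto)
  have "vcomp C c (vcomp C a ?i) = vcomp C (vcomp C c a) ?i"
    by (rule vcomp_assoc) (use a c ac ca in auto)
  also have "\<dots> = id2 C (tgt2 C c)" using a c ac ca by simp
  finally show "right_invertible2 C c" unfolding right_invertible2_def
    by (intro conjI bexI[where x="vcomp C a ?i"]) (use a c ac ca in auto)
qed

text \<open>Naturality of whiskering by \<open>t : k \<Rightarrow> 1\<close>: \<open>b \<cdot> (t * g) = (t * g') \<cdot> (k * b)\<close> for \<open>b : g \<Rightarrow> g'\<close>.\<close>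

lemma whisker_conjugate:
  assumes b: "b \<in> Cell C" and t: "invertible2 C t" "tgt2 C t = idm C y" and hb: "hcod C (src2 C b) = y"
  shows "b = vcomp C (vcomp C (hcomp C t (id2 C (tgt2 C b))) (hcomp C (id2 C (src2 C t)) b))
               (inv2 C (hcomp C t (id2 C (src2 C b))))"
proof -
  let ?k = "src2 C t" and ?T = "hcomp C t (id2 C (src2 C b))" and ?T' = "hcomp C t (id2 C (tgt2 C b))"
  have y: "y \<in> Ob C" using b by (simp flip: hb)
  have k: "hdom C ?k = y" "hcod C ?k = y"
    using t y by (metis hdom_tgt2 hcod_tgt2 hdom_idm hcod_idm invertible2_in_Cell)+
  have "vcomp C b ?T = vcomp C (hcomp C (id2 C (idm C y)) b) ?T" using b by (simp add: hb)
  also have "\<dots> = hcomp C (vcomp C (id2 C (idm C y)) t) (vcomp C b (id2 C (src2 C b)))"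
    by (rule interchange) (use b t y k in \<open>auto simp: hb\<close>)
  also have "\<dots> = hcomp C (vcomp C t (id2 C ?k)) (vcomp C (id2 C (tgt2 C b)) b)" using b t by simp
  also have "\<dots> = vcomp C ?T' (hcomp C (id2 C ?k) b)"
    by (rule interchange[symmetric]) (use b t y k in \<open>auto simp: hb\<close>)
  finally have "vcomp C b ?T = vcomp C ?T' (hcomp C (id2 C ?k) b)" .
  moreover have "b = vcomp C (vcomp C b ?T) (inv2 C ?T)"
  proof -
    have "vcomp C (vcomp C b ?T) (inv2 C ?T) = vcomp C b (vcomp C ?T (inv2 C ?T))"
      by (rule vcomp_assoc[symmetric]) (use b t k in \<open>auto simp: hb\<close>)
    also have "\<dots> = b" using b t k by (simp add: hb)
    finally show ?thesis by simp
  qed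
  ultimately show ?thesis by simp
qed

lemma
  assumes b: "b \<in> Cell C" and k: "k \<in> Hom C" "hdom C k = hcod C (src2 C b)"
    and m: "m \<in> Hom C" "hdom C m = hcod C k" and t: "iso2 C t (comp C m k) (idm C (hdom C k))"
  shows left_invertible2_cancel_whisker:
      "left_invertible2 C (hcomp C (id2 C k) b) \<Longrightarrow> left_invertible2 C b"
    and right_invertible2_cancel_whisker:
      "right_invertible2 C (hcomp C (id2 C k) b) \<Longrightarrow> right_invertible2 C b"
proof -
  let ?y = "hcod C (src2 C b)"
  let ?T = "hcomp C t (id2 C (src2 C b))" and ?T' = "hcomp C t (id2 C (tgt2 C b))"
    and ?Q = "hcomp C (id2 C (comp C m k)) b"
  have t: "invertible2 C t" "src2 C t = comp C m k" "tgt2 C t = idm C ?y"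
    using t k unfolding iso2_def by auto
  have whisk: "hcomp C (id2 C m) (hcomp C (id2 C k) b) = ?Q"
    by (subst hcomp_assoc) (use b k m in auto)
  have b_eq: "b = vcomp C (vcomp C ?T' ?Q) (inv2 C ?T)"
    using whisker_conjugate[OF b t(1,3) refl] by (simp add: t(2))
  have T: "invertible2 C (inv2 C ?T)" "invertible2 C ?T'" using b k m t by auto
  have Q: "?Q \<in> Cell C" using b k m by auto
  have bounds: "tgt2 C ?Q = src2 C ?T'" "tgt2 C (inv2 C ?T) = src2 C (vcomp C ?T' ?Q)"
    using b k m t Q by auto
  show "left_invertible2 C b" if "left_invertible2 C (hcomp C (id2 C k) b)"
  proof -
    have "left_invertible2 C ?Q" using left_invertible2_whisker[OF that m(1)] b k m whisk by simp
    then show ?thesis using T bounds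
      by (subst b_eq) (intro left_invertible2_vcomp; simp add: invertible2_iff_left_right)
  qed
  show "right_invertible2 C b" if "right_invertible2 C (hcomp C (id2 C k) b)"
  proof -
    have "right_invertible2 C ?Q" using right_invertible2_whisker[OF that m(1)] b k m whisk by simp
    then show ?thesis using T bounds
      by (subst b_eq) (intro right_invertible2_vcomp; simp add: invertible2_iff_left_right)
  qed
qed

lemma vcomp_inv2_commute:
  assumes a: "a \<in> Cell C" and c: "c \<in> Cell C" and s0: "invertible2 C s0" and s1: "invertible2 C s1"
    and bounds: "tgt2 C s0 = src2 C a" "src2 C s1 = tgt2 C c"
    and commute: "vcomp C a s0 = vcomp C s1 c"
  shows "vcomp C c (inv2 C s0) = vcomp C (inv2 C s1) a"
proof -
  have src: "src2 C s0 = src2 C c"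
    using arg_cong[where f="src2 C", OF commute] a c s0 s1 bounds by simp
  have "vcomp C (inv2 C s1) a = vcomp C (inv2 C s1) (vcomp C a (vcomp C s0 (inv2 C s0)))"
    using s0 a bounds by simp
  also have "\<dots> = vcomp C (inv2 C s1) (vcomp C (vcomp C s1 c) (inv2 C s0))"
    by (subst vcomp_assoc) (use s0 a bounds in \<open>auto simp: commute\<close>)
  also have "\<dots> = vcomp C (vcomp C (inv2 C s1) s1) (vcomp C c (inv2 C s0))"
    using s0 s1 c bounds src by (simp add: vcomp_assoc)
  also have "\<dots> = vcomp C c (inv2 C s0)" using s0 s1 c bounds src by simp
  finally show ?thesis by simp
qed

lemma hcomp_eq_whiskers:
  assumes a: "a \<in> Cell C" and b: "b \<in> Cell C" and ab: "hcod C (src2 C a) = hdom C (src2 C b)"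
  shows "hcomp C b a = vcomp C (hcomp C b (id2 C (tgt2 C a))) (hcomp C (id2 C (src2 C b)) a)"
    and "hcomp C b a = vcomp C (hcomp C (id2 C (tgt2 C b)) a) (hcomp C b (id2 C (src2 C a)))"
proof -
  have "vcomp C (hcomp C b (id2 C (tgt2 C a))) (hcomp C (id2 C (src2 C b)) a)
      = hcomp C (vcomp C b (id2 C (src2 C b))) (vcomp C (id2 C (tgt2 C a)) a)"
    by (rule interchange) (use a b ab in auto)
  then show "hcomp C b a = vcomp C (hcomp C b (id2 C (tgt2 C a))) (hcomp C (id2 C (src2 C b)) a)"
    using a b by simp
  have "vcomp C (hcomp C (id2 C (tgt2 C b)) a) (hcomp C b (id2 C (src2 C a)))
      = hcomp C (vcomp C (id2 C (tgt2 C b)) b) (vcomp C a (id2 C (src2 C a)))"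
    by (rule interchange) (use a b ab in auto)
  then show "hcomp C b a = vcomp C (hcomp C (id2 C (tgt2 C b)) a) (hcomp C b (id2 C (src2 C a)))"
    using a b by simp
qed

end

section \<open>The 2-category \<open>\<V>\<bbbH>C\<close>\<close>

lemma VV_HD_simps [simp]:
  "Ob (VV (HD C)) = Ob C" "Hom (VV (HD C)) = Cell C"
  "hdom (VV (HD C)) a = hdom C (src2 C a)" "hcod (VV (HD C)) a = hcod C (src2 C a)"
  "comp (VV (HD C)) b a = hcomp C b a" "idm (VV (HD C)) x = id2 C (idm C x)"
  "src2 (VV (HD C)) (a, s0, s1, b) = a" "tgt2 (VV (HD C)) (a, s0, s1, b) = b"
  "vcomp (VV (HD C)) (b, t0, t1, c) (a, s0, s1, b') = (a, vcomp C t0 s0, vcomp C t1 s1, c)"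
  "id2 (VV (HD C)) a = (a, id2 C (src2 C a), id2 C (tgt2 C a), a)"
  by (simp_all add: VV_def HD_def)

lemma Cell_VV_HD [simp]:
  "(a, s0, s1, b) \<in> Cell (VV (HD C)) \<longleftrightarrow>
     a \<in> Cell C \<and> b \<in> Cell C \<and> hdom C (src2 C a) = hdom C (src2 C b) \<and> hcod C (src2 C a) = hcod C (src2 C b)
     \<and> s0 \<in> Cell C \<and> s1 \<in> Cell C \<and> src2 C s0 = src2 C a \<and> tgt2 C s0 = src2 C b
     \<and> src2 C s1 = tgt2 C a \<and> tgt2 C s1 = tgt2 C b \<and> vcomp C b s0 = vcomp C s1 a"
  by (auto simp: VV_def HD_def)

lemma iso2_VV_HD_iff [simp]:
  "iso2 (VV (HD C)) (c, s0, s1, a) x y \<longleftrightarrow> invertible2 (VV (HD C)) (c, s0, s1, a) \<and> c = x \<and> a = y"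
  unfolding iso2_def by simp

lemma VVf_HDf_simps [simp]:
  "Fo (VVf (HDf F)) = Fo F" "Fm (VVf (HDf F)) = Fc F"
  "Fc (VVf (HDf F)) (a, s0, s1, b) = (Fc F a, Fc F s0, Fc F s1, Fc F b)"
  by (simp_all add: VVf_def HDf_def)

lemma HH_HD [simp]: "HH (HD C) = C"
  by (simp add: HH_def HD_def)

lemma HHf_HDf [simp]: "HHf (HDf F) = F"
  by (simp add: HHf_def HDf_def)

context two_category
begin

lemma invertible2_VV_HD_iff:
  "invertible2 (VV (HD C)) (c, s0, s1, a) \<longleftrightarrow>
     (c, s0, s1, a) \<in> Cell (VV (HD C)) \<and> invertible2 C s0 \<and> invertible2 C s1"
proof
  assume inv: "invertible2 (VV (HD C)) (c, s0, s1, a)"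
  then obtain q where q: "q \<in> Cell (VV (HD C))" "src2 (VV (HD C)) q = a" "tgt2 (VV (HD C)) q = c"
    "vcomp (VV (HD C)) q (c, s0, s1, a) = id2 (VV (HD C)) c"
    "vcomp (VV (HD C)) (c, s0, s1, a) q = id2 (VV (HD C)) a"
    unfolding invertible2_def by auto
  obtain r0 r1 where "q = (a, r0, r1, c)" using q(2,3) by (cases q) auto
  with q inv show "(c, s0, s1, a) \<in> Cell (VV (HD C)) \<and> invertible2 C s0 \<and> invertible2 C s1"
    unfolding invertible2_def[of "VV (HD C)"] by (auto intro: invertible2I)
next
  assume "(c, s0, s1, a) \<in> Cell (VV (HD C)) \<and> invertible2 C s0 \<and> invertible2 C s1"
  then have cell: "(c, s0, s1, a) \<in> Cell (VV (HD C))" and s: "invertible2 C s0" "invertible2 C s1"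
    by auto
  have "vcomp C c (inv2 C s0) = vcomp C (inv2 C s1) a"
    by (rule vcomp_inv2_commute) (use cell s in auto)
  then show "invertible2 (VV (HD C)) (c, s0, s1, a)"
    using cell s unfolding invertible2_def[of "VV (HD C)"]
    by (intro conjI bexI[where x="(a, inv2 C s0, inv2 C s1, c)"]) auto
qed

lemma iso2_VV_HD_if_invertible2:
  assumes a: "invertible2 C a" and b: "invertible2 C b" and s: "iso2 C s (src2 C a) (src2 C b)"
  shows "\<exists>q. iso2 (VV (HD C)) q a b"
proof -
  have s: "invertible2 C s" "src2 C s = src2 C a" "tgt2 C s = src2 C b"
    using s unfolding iso2_def by auto
  let ?s1 = "vcomp C b (vcomp C s (inv2 C a))"
  have "vcomp C ?s1 a = vcomp C b (vcomp C (vcomp C s (inv2 C a)) a)"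
    by (rule vcomp_assoc[symmetric]) (use a b s in auto)
  also have "\<dots> = vcomp C b (vcomp C s (vcomp C (inv2 C a) a))"
    by (subst vcomp_assoc) (use a b s in auto)
  finally have "vcomp C b s = vcomp C ?s1 a" using a b s by simp
  moreover have "hdom C (src2 C a) = hdom C (src2 C b)" "hcod C (src2 C a) = hcod C (src2 C b)"
    using s by (metis hdom_tgt2 hcod_tgt2 invertible2_in_Cell)+
  ultimately have "invertible2 (VV (HD C)) (a, s, ?s1, b)"
    using a b s by (simp add: invertible2_VV_HD_iff)
  then show ?thesis by auto
qed

lemma equivalence_VV_HD_if_invertible2:
  assumes f: "equivalence C (src2 C a)" and a: "invertible2 C a"
  shows "equivalence (VV (HD C)) a"
proof -
  let ?f = "src2 C a"
  obtain h \<eta> \<epsilon> where h: "h \<in> Hom C" "hdom C h = hcod C ?f" "hcod C h = hdom C ?f"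
    and \<eta>: "iso2 C \<eta> (idm C (hdom C ?f)) (comp C h ?f)" and \<epsilon>: "iso2 C \<epsilon> (comp C ?f h) (idm C (hcod C ?f))"
    using f unfolding equivalence_def by blast
  have "\<exists>u. iso2 (VV (HD C)) u (id2 C (idm C (hdom C ?f))) (hcomp C (id2 C h) a)"
    by (rule iso2_VV_HD_if_invertible2) (use a h \<eta> in auto)
  moreover have "\<exists>v. iso2 (VV (HD C)) v (hcomp C a (id2 C h)) (id2 C (idm C (hcod C ?f)))"
    by (rule iso2_VV_HD_if_invertible2) (use a h \<epsilon> in auto)
  ultimately show ?thesis
    using a h unfolding equivalence_def[of "VV (HD C)"] by (intro conjI bexI[where x="id2 C h"]) auto
qed

lemma
  assumes "equivalence (VV (HD C)) b"
  shows invertible2_if_equivalence_VV_HD: "invertible2 C b"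
    and equivalence_src2_if_equivalence_VV_HD: "equivalence C (src2 C b)"
proof -
  let ?x = "hdom C (src2 C b)" and ?y = "hcod C (src2 C b)"
  let ?g = "src2 C b" and ?g' = "tgt2 C b"
  obtain e' u v where b: "b \<in> Cell C" and e': "e' \<in> Cell C"
    "hdom C (src2 C e') = ?y" "hcod C (src2 C e') = ?x"
    and u: "iso2 (VV (HD C)) u (id2 C (idm C ?x)) (hcomp C e' b)"
    and v: "iso2 (VV (HD C)) v (hcomp C b e') (id2 C (idm C ?y))"
    using assms unfolding equivalence_def[of "VV (HD C)"] by auto
  let ?h = "src2 C e'" and ?h' = "tgt2 C e'" and ?X = "hcomp C e' b"
  obtain s0 s1 t0 t1 where "u = (id2 C (idm C ?x), s0, s1, ?X)" "v = (hcomp C b e', t0, t1, id2 C (idm C ?y))"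
    using u v by (cases u, cases v) auto
  then have s: "invertible2 C s0" "invertible2 C s1" "src2 C s0 = idm C ?x" "tgt2 C s0 = comp C ?h ?g"
      "src2 C s1 = idm C ?x" "vcomp C ?X s0 = s1"
    and t: "invertible2 C t0" "invertible2 C t1" "src2 C t0 = comp C ?g ?h" "tgt2 C t0 = idm C ?y"
      "src2 C t1 = comp C ?g' ?h'" "tgt2 C t1 = idm C ?y"
    using u v b e' by (auto simp: invertible2_VV_HD_iff)
  show "equivalence C ?g"
    unfolding equivalence_def iso2_def using b e' s t by (intro conjI bexI[where x="?h"] exI) auto
  have "?X = vcomp C (vcomp C ?X s0) (inv2 C s0)"
    by (subst vcomp_assoc[symmetric]) (use b e' s in auto)
  then have X: "invertible2 C ?X" using b e' s by simp
  have "left_invertible2 C (hcomp C (id2 C ?h) b)"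
    using X hcomp_eq_whiskers(1)[OF b e'(1)] b e'
    by (intro left_invertible2_if_vcomp_invertible2[where c="hcomp C e' (id2 C ?g')"]) auto
  then have left: "left_invertible2 C b"
    using left_invertible2_cancel_whisker[of b ?h ?g t0] b e' t by (auto simp: iso2_def)
  have "right_invertible2 C (hcomp C (id2 C ?h') b)"
    using X hcomp_eq_whiskers(2)[OF b e'(1)] b e'
    by (intro right_invertible2_if_vcomp_invertible2[where a="hcomp C e' (id2 C ?g)"]) auto
  then have right: "right_invertible2 C b"
    using right_invertible2_cancel_whisker[of b ?h' ?g' t1] b e' t by (auto simp: iso2_def)
  show "invertible2 C b" using left right by (simp add: invertible2_iff_left_right)
qed

lemma equivalence_VV_HD_iff:
  "equivalence (VV (HD C)) a \<longleftrightarrow> invertible2 C a \<and> equivalence C (src2 C a)"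
  using invertible2_if_equivalence_VV_HD equivalence_src2_if_equivalence_VV_HD
    equivalence_VV_HD_if_invertible2 by blast

end

section \<open>Biequivalences and Lack fibrations\<close>

definition essentially_surjective ::
  "('o,'m,'c) twocat \<Rightarrow> ('p,'n,'d) twocat \<Rightarrow> ('o,'m,'c,'p,'n,'d) twofun \<Rightarrow> bool" where
  "essentially_surjective A B F \<longleftrightarrow>
     (\<forall>y\<in>Ob B. \<exists>x\<in>Ob A. \<exists>e. equivalence B e \<and> hdom B e = Fo F x \<and> hcod B e = y)"

definition essentially_full ::
  "('o,'m,'c) twocat \<Rightarrow> ('p,'n,'d) twocat \<Rightarrow> ('o,'m,'c,'p,'n,'d) twofun \<Rightarrow> bool" where
  "essentially_full A B F \<longleftrightarrow>
     (\<forall>x\<in>Ob A. \<forall>x'\<in>Ob A. \<forall>g\<in>Hom B. hdom B g = Fo F x \<longrightarrow> hcod B g = Fo F x' \<longrightarrow>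
        (\<exists>f\<in>Hom A. hdom A f = x \<and> hcod A f = x' \<and> (\<exists>b. iso2 B b (Fm F f) g)))"

definition locally_fully_faithful ::
  "('o,'m,'c) twocat \<Rightarrow> ('p,'n,'d) twocat \<Rightarrow> ('o,'m,'c,'p,'n,'d) twofun \<Rightarrow> bool" where
  "locally_fully_faithful A B F \<longleftrightarrow>
     (\<forall>f\<in>Hom A. \<forall>f'\<in>Hom A. hdom A f = hdom A f' \<longrightarrow> hcod A f = hcod A f' \<longrightarrow>
        bij_betw (Fc F) {a\<in>Cell A. src2 A a = f \<and> tgt2 A a = f'}
                        {b\<in>Cell B. src2 B b = Fm F f \<and> tgt2 B b = Fm F f'})"

lemma biequivalence_iff:
  "biequivalence A B F \<longleftrightarrow>
     essentially_surjective A B F \<and> essentially_full A B F \<and> locally_fully_faithful A B F"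
  unfolding biequivalence_def essentially_surjective_def essentially_full_def
    locally_fully_faithful_def by (rule refl)

lemma locally_fully_faithfulI:
  assumes preserves: "\<And>a. a \<in> Cell A \<Longrightarrow>
      Fc F a \<in> Cell B \<and> src2 B (Fc F a) = Fm F (src2 A a) \<and> tgt2 B (Fc F a) = Fm F (tgt2 A a)"
    and faithful: "\<And>a a'. \<lbrakk>a \<in> Cell A; a' \<in> Cell A; src2 A a = src2 A a'; tgt2 A a = tgt2 A a';
      Fc F a = Fc F a'\<rbrakk> \<Longrightarrow> a = a'"
    and full: "\<And>f f' b. \<lbrakk>f \<in> Hom A; f' \<in> Hom A; hdom A f = hdom A f'; hcod A f = hcod A f';
      b \<in> Cell B; src2 B b = Fm F f; tgt2 B b = Fm F f'\<rbrakk>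
      \<Longrightarrow> \<exists>a\<in>Cell A. src2 A a = f \<and> tgt2 A a = f' \<and> Fc F a = b"
  shows "locally_fully_faithful A B F"
  unfolding locally_fully_faithful_def
proof (intro ballI impI bij_betwI')
  fix f f' assume "f \<in> Hom A" "f' \<in> Hom A" "hdom A f = hdom A f'" "hcod A f = hcod A f'"
  then show "\<exists>a\<in>{a \<in> Cell A. src2 A a = f \<and> tgt2 A a = f'}. b = Fc F a"
    if "b \<in> {b \<in> Cell B. src2 B b = Fm F f \<and> tgt2 B b = Fm F f'}" for b
    using full[of f f' b] that by force
qed (use preserves faithful in auto)

definition lifts_equivalences ::
  "('o,'m,'c) twocat \<Rightarrow> ('p,'n,'d) twocat \<Rightarrow> ('o,'m,'c,'p,'n,'d) twofun \<Rightarrow> bool" where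
  "lifts_equivalences A B G \<longleftrightarrow>
     (\<forall>z\<in>Ob A. \<forall>b. equivalence B b \<longrightarrow> hcod B b = Fo G z \<longrightarrow>
        (\<exists>a. equivalence A a \<and> hcod A a = z \<and> Fm G a = b))"

definition lifts_invertible2 ::
  "('o,'m,'c) twocat \<Rightarrow> ('p,'n,'d) twocat \<Rightarrow> ('o,'m,'c,'p,'n,'d) twofun \<Rightarrow> bool" where
  "lifts_invertible2 A B G \<longleftrightarrow>
     (\<forall>c\<in>Hom A. \<forall>\<beta>. invertible2 B \<beta> \<longrightarrow> tgt2 B \<beta> = Fm G c \<longrightarrow>
        (\<exists>\<alpha>. invertible2 A \<alpha> \<and> tgt2 A \<alpha> = c \<and> Fc G \<alpha> = \<beta>))"

lemma lack_fibration_iff: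
  "lack_fibration A B G \<longleftrightarrow> lifts_equivalences A B G \<and> lifts_invertible2 A B G"
  unfolding lack_fibration_def lifts_equivalences_def lifts_invertible2_def by (rule refl)

locale two_functor = A: two_category A + B: two_category B
  for A :: "('o,'m,'c) twocat" and B :: "('p,'n,'d) twocat" +
  fixes F :: "('o,'m,'c,'p,'n,'d) twofun"
  assumes Fo_in_Ob [simp]: "x \<in> Ob A \<Longrightarrow> Fo F x \<in> Ob B"
    and Fm_idm [simp]: "x \<in> Ob A \<Longrightarrow> Fm F (idm A x) = idm B (Fo F x)"
    and Fm_in_Hom [simp]: "f \<in> Hom A \<Longrightarrow> Fm F f \<in> Hom B"
    and hdom_Fm [simp]: "f \<in> Hom A \<Longrightarrow> hdom B (Fm F f) = Fo F (hdom A f)"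
    and hcod_Fm [simp]: "f \<in> Hom A \<Longrightarrow> hcod B (Fm F f) = Fo F (hcod A f)"
    and Fc_id2 [simp]: "f \<in> Hom A \<Longrightarrow> Fc F (id2 A f) = id2 B (Fm F f)"
    and Fm_comp [simp]: "\<lbrakk>f \<in> Hom A; g \<in> Hom A; hcod A f = hdom A g\<rbrakk>
      \<Longrightarrow> Fm F (comp A g f) = comp B (Fm F g) (Fm F f)"
    and Fc_in_Cell [simp]: "a \<in> Cell A \<Longrightarrow> Fc F a \<in> Cell B"
    and src2_Fc [simp]: "a \<in> Cell A \<Longrightarrow> src2 B (Fc F a) = Fm F (src2 A a)"
    and tgt2_Fc [simp]: "a \<in> Cell A \<Longrightarrow> tgt2 B (Fc F a) = Fm F (tgt2 A a)"
    and Fc_vcomp [simp]: "\<lbrakk>a \<in> Cell A; b \<in> Cell A; tgt2 A a = src2 A b\<rbrakk>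
      \<Longrightarrow> Fc F (vcomp A b a) = vcomp B (Fc F b) (Fc F a)"
    and Fc_hcomp [simp]: "\<lbrakk>a \<in> Cell A; b \<in> Cell A; hcod A (src2 A a) = hdom A (src2 A b)\<rbrakk>
      \<Longrightarrow> Fc F (hcomp A b a) = hcomp B (Fc F b) (Fc F a)"

lemma two_functor_if_is_2functor:
  "\<lbrakk>is_2cat A; is_2cat B; is_2functor A B F\<rbrakk> \<Longrightarrow> two_functor A B F"
  unfolding two_functor_def two_functor_axioms_def is_2functor_def
  by (simp add: two_category_if_is_2cat)

context two_functor
begin

lemma invertible2_Fc [simp]: "invertible2 A a \<Longrightarrow> invertible2 B (Fc F a)"
  by (rule B.invertible2I[where b="Fc F (inv2 A a)"]) (auto simp flip: Fc_vcomp)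

lemma Fc_inv2 [simp]: "invertible2 A a \<Longrightarrow> Fc F (inv2 A a) = inv2 B (Fc F a)"
  by (rule B.inv2_unique) (auto simp flip: Fc_vcomp)

lemma
  assumes ff: "locally_fully_faithful A B F"
  shows locally_fully_faithful_inj: "\<lbrakk>a \<in> Cell A; a' \<in> Cell A; src2 A a = src2 A a'; tgt2 A a = tgt2 A a';
      Fc F a = Fc F a'\<rbrakk> \<Longrightarrow> a = a'"
    and locally_fully_faithful_surj: "\<lbrakk>f \<in> Hom A; f' \<in> Hom A; hdom A f = hdom A f'; hcod A f = hcod A f';
      b \<in> Cell B; src2 B b = Fm F f; tgt2 B b = Fm F f'\<rbrakk>
      \<Longrightarrow> \<exists>a\<in>Cell A. src2 A a = f \<and> tgt2 A a = f' \<and> Fc F a = b"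
proof -
  note bij = ff[unfolded locally_fully_faithful_def, rule_format]
  show "a = a'" if "a \<in> Cell A" "a' \<in> Cell A" "src2 A a = src2 A a'" "tgt2 A a = tgt2 A a'"
    "Fc F a = Fc F a'" for a a'
    using bij_betw_imp_inj_on[OF bij[of "src2 A a" "tgt2 A a"]] that by (auto dest: inj_onD)
  show "\<exists>a\<in>Cell A. src2 A a = f \<and> tgt2 A a = f' \<and> Fc F a = b"
    if "f \<in> Hom A" "f' \<in> Hom A" "hdom A f = hdom A f'" "hcod A f = hcod A f'"
      "b \<in> Cell B" "src2 B b = Fm F f" "tgt2 B b = Fm F f'" for f f' b
  proof -
    have "b \<in> Fc F ` {a \<in> Cell A. src2 A a = f \<and> tgt2 A a = f'}"
      using bij_betw_imp_surj_on[OF bij[of f f']] that by simp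
    then show ?thesis by force
  qed
qed

lemma essentially_surjective_VV_HD:
  assumes "essentially_surjective A B F"
  shows "essentially_surjective (VV (HD A)) (VV (HD B)) (VVf (HDf F))"
  unfolding essentially_surjective_def
proof (intro ballI)
  fix y assume "y \<in> Ob (VV (HD B))"
  then obtain x e where "x \<in> Ob A" "equivalence B e" "hdom B e = Fo F x" "hcod B e = y"
    using assms unfolding essentially_surjective_def by auto
  moreover have "e \<in> Hom B" using \<open>equivalence B e\<close> unfolding equivalence_def by blast
  ultimately show "\<exists>x\<in>Ob (VV (HD A)). \<exists>e. equivalence (VV (HD B)) e
      \<and> hdom (VV (HD B)) e = Fo (VVf (HDf F)) x \<and> hcod (VV (HD B)) e = y"
    by (intro bexI[where x=x] exI[where x="id2 B e"]) (auto simp: B.equivalence_VV_HD_iff)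
qed

lemma essentially_full_VV_HD:
  assumes full: "essentially_full A B F" and ff: "locally_fully_faithful A B F"
  shows "essentially_full (VV (HD A)) (VV (HD B)) (VVf (HDf F))"
  unfolding essentially_full_def VV_HD_simps VVf_HDf_simps
proof (intro ballI impI)
  fix x x' \<beta> assume x: "x \<in> Ob A" "x' \<in> Ob A" and \<beta>: "\<beta> \<in> Cell B"
    and bounds: "hdom B (src2 B \<beta>) = Fo F x" "hcod B (src2 B \<beta>) = Fo F x'"
  obtain f \<phi> where f: "f \<in> Hom A" "hdom A f = x" "hcod A f = x'"
    and \<phi>: "invertible2 B \<phi>" "src2 B \<phi> = Fm F f" "tgt2 B \<phi> = src2 B \<beta>"
    using full x \<beta> bounds unfolding essentially_full_def iso2_def by (metis B.src2_in_Hom)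
  obtain f' \<phi>' where f': "f' \<in> Hom A" "hdom A f' = x" "hcod A f' = x'"
    and \<phi>': "invertible2 B \<phi>'" "src2 B \<phi>' = Fm F f'" "tgt2 B \<phi>' = tgt2 B \<beta>"
    using full x \<beta> bounds unfolding essentially_full_def iso2_def
    by (metis B.tgt2_in_Hom B.hdom_tgt2 B.hcod_tgt2)
  let ?\<gamma> = "vcomp B (inv2 B \<phi>') (vcomp B \<beta> \<phi>)"
  obtain \<alpha> where \<alpha>: "\<alpha> \<in> Cell A" "src2 A \<alpha> = f" "tgt2 A \<alpha> = f'" "Fc F \<alpha> = ?\<gamma>"
    using locally_fully_faithful_surj[OF ff f(1) f'(1), of ?\<gamma>] f f' \<phi> \<phi>' \<beta> by auto
  have "vcomp B \<phi>' (Fc F \<alpha>) = vcomp B (vcomp B \<phi>' (inv2 B \<phi>')) (vcomp B \<beta> \<phi>)"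
    unfolding \<alpha>(4) by (rule B.vcomp_assoc) (use \<phi> \<phi>' \<beta> in auto)
  then have "vcomp B \<beta> \<phi> = vcomp B \<phi>' (Fc F \<alpha>)" using \<phi> \<phi>' \<beta> by simp
  then have "invertible2 (VV (HD B)) (Fc F \<alpha>, \<phi>, \<phi>', \<beta>)"
    using \<alpha> \<beta> \<phi> \<phi>' f f' bounds by (simp add: B.invertible2_VV_HD_iff)
  then show "\<exists>\<alpha>\<in>Cell A. hdom A (src2 A \<alpha>) = x \<and> hcod A (src2 A \<alpha>) = x'
      \<and> (\<exists>q. iso2 (VV (HD B)) q (Fc F \<alpha>) \<beta>)"
    using \<alpha> f by (intro bexI[where x=\<alpha>]) auto
qed

lemma locally_fully_faithful_VV_HD:
  assumes ff: "locally_fully_faithful A B F"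
  shows "locally_fully_faithful (VV (HD A)) (VV (HD B)) (VVf (HDf F))"
proof (rule locally_fully_faithfulI)
  fix q assume "q \<in> Cell (VV (HD A))"
  then show "Fc (VVf (HDf F)) q \<in> Cell (VV (HD B))
      \<and> src2 (VV (HD B)) (Fc (VVf (HDf F)) q) = Fm (VVf (HDf F)) (src2 (VV (HD A)) q)
      \<and> tgt2 (VV (HD B)) (Fc (VVf (HDf F)) q) = Fm (VVf (HDf F)) (tgt2 (VV (HD A)) q)"
    by (cases q) (auto simp flip: Fc_vcomp)
next
  fix q q' assume q: "q \<in> Cell (VV (HD A))" "q' \<in> Cell (VV (HD A))"
    and bounds: "src2 (VV (HD A)) q = src2 (VV (HD A)) q'" "tgt2 (VV (HD A)) q = tgt2 (VV (HD A)) q'"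
    and eq: "Fc (VVf (HDf F)) q = Fc (VVf (HDf F)) q'"
  obtain \<alpha> s0 s1 \<alpha>' r0 r1 where qq: "q = (\<alpha>, s0, s1, \<alpha>')" "q' = (\<alpha>, r0, r1, \<alpha>')"
    using bounds by (cases q, cases q') auto
  have "s0 = r0" "s1 = r1"
    using q eq unfolding qq by (auto intro: locally_fully_faithful_inj[OF ff])
  then show "q = q'" unfolding qq by simp
next
  fix \<alpha> \<alpha>' q
  assume \<alpha>: "\<alpha> \<in> Hom (VV (HD A))" "\<alpha>' \<in> Hom (VV (HD A))"
    and parallel: "hdom (VV (HD A)) \<alpha> = hdom (VV (HD A)) \<alpha>'" "hcod (VV (HD A)) \<alpha> = hcod (VV (HD A)) \<alpha>'"
    and q: "q \<in> Cell (VV (HD B))" "src2 (VV (HD B)) q = Fm (VVf (HDf F)) \<alpha>"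
      "tgt2 (VV (HD B)) q = Fm (VVf (HDf F)) \<alpha>'"
  obtain t0 t1 where qq: "q = (Fc F \<alpha>, t0, t1, Fc F \<alpha>')" using q by (cases q) auto
  have t: "t0 \<in> Cell B" "t1 \<in> Cell B" "src2 B t0 = Fm F (src2 A \<alpha>)" "tgt2 B t0 = Fm F (src2 A \<alpha>')"
    "src2 B t1 = Fm F (tgt2 A \<alpha>)" "tgt2 B t1 = Fm F (tgt2 A \<alpha>')"
    "vcomp B (Fc F \<alpha>') t0 = vcomp B t1 (Fc F \<alpha>)"
    using q \<alpha> unfolding qq by auto
  obtain s0 where s0: "s0 \<in> Cell A" "src2 A s0 = src2 A \<alpha>" "tgt2 A s0 = src2 A \<alpha>'" "Fc F s0 = t0"
    using locally_fully_faithful_surj[OF ff, of "src2 A \<alpha>" "src2 A \<alpha>'" t0] \<alpha> parallel t by auto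
  obtain s1 where s1: "s1 \<in> Cell A" "src2 A s1 = tgt2 A \<alpha>" "tgt2 A s1 = tgt2 A \<alpha>'" "Fc F s1 = t1"
    using locally_fully_faithful_surj[OF ff, of "tgt2 A \<alpha>" "tgt2 A \<alpha>'" t1] \<alpha> parallel t by auto
  have "vcomp A \<alpha>' s0 = vcomp A s1 \<alpha>"
    by (rule locally_fully_faithful_inj[OF ff]) (use s0 s1 \<alpha> t in auto)
  then have "(\<alpha>, s0, s1, \<alpha>') \<in> Cell (VV (HD A))" using s0 s1 \<alpha> parallel by auto
  then show "\<exists>p\<in>Cell (VV (HD A)). src2 (VV (HD A)) p = \<alpha> \<and> tgt2 (VV (HD A)) p = \<alpha>'
      \<and> Fc (VVf (HDf F)) p = q"
    unfolding qq using s0 s1 by (intro bexI[where x="(\<alpha>, s0, s1, \<alpha>')"]) auto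
qed

lemma biequivalence_VV_HD:
  "biequivalence A B F \<Longrightarrow> biequivalence (VV (HD A)) (VV (HD B)) (VVf (HDf F))"
  by (simp add: biequivalence_iff essentially_surjective_VV_HD essentially_full_VV_HD
      locally_fully_faithful_VV_HD)

lemma lifts_equivalences_VV_HD:
  assumes eq: "lifts_equivalences A B F" and inv: "lifts_invertible2 A B F"
  shows "lifts_equivalences (VV (HD A)) (VV (HD B)) (VVf (HDf F))"
  unfolding lifts_equivalences_def VV_HD_simps VVf_HDf_simps
proof (intro ballI allI impI)
  fix z b assume z: "z \<in> Ob A" and b: "equivalence (VV (HD B)) b" and hb: "hcod B (src2 B b) = Fo F z"
  have b: "invertible2 B b" "equivalence B (src2 B b)" using b by (auto simp: B.equivalence_VV_HD_iff)
  obtain a0 where a0: "equivalence A a0" "hcod A a0 = z" "Fm F a0 = src2 B b"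
    using eq z b hb unfolding lifts_equivalences_def by blast
  have "a0 \<in> Hom A" using a0 unfolding equivalence_def by blast
  then obtain \<alpha> where \<alpha>: "invertible2 A \<alpha>" "tgt2 A \<alpha> = a0" "Fc F \<alpha> = inv2 B b"
    using inv b a0 unfolding lifts_invertible2_def by (metis B.invertible2_inv2 B.tgt2_inv2)
  have "equivalence (VV (HD A)) (inv2 A \<alpha>)" using \<alpha> a0 by (simp add: A.equivalence_VV_HD_iff)
  then show "\<exists>a. equivalence (VV (HD A)) a \<and> hcod A (src2 A a) = z \<and> Fc F a = b"
    using \<alpha> a0 b by (intro exI[where x="inv2 A \<alpha>"]) auto
qed

lemma lifts_invertible2_VV_HD:
  assumes inv: "lifts_invertible2 A B F"
  shows "lifts_invertible2 (VV (HD A)) (VV (HD B)) (VVf (HDf F))"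
  unfolding lifts_invertible2_def VV_HD_simps
proof (intro ballI allI impI)
  fix c q assume c: "c \<in> Cell A" and q: "invertible2 (VV (HD B)) q"
    and hq: "tgt2 (VV (HD B)) q = Fm (VVf (HDf F)) c"
  obtain b t0 t1 where qq: "q = (b, t0, t1, Fc F c)" using hq by (cases q) auto
  have t: "invertible2 B t0" "invertible2 B t1" "b \<in> Cell B" "src2 B t0 = src2 B b"
    "tgt2 B t0 = Fm F (src2 A c)" "src2 B t1 = tgt2 B b" "tgt2 B t1 = Fm F (tgt2 A c)"
    "vcomp B (Fc F c) t0 = vcomp B t1 b"
    using q c unfolding qq by (auto simp: B.invertible2_VV_HD_iff)
  obtain s0 where s0: "invertible2 A s0" "tgt2 A s0 = src2 A c" "Fc F s0 = t0"
    using inv c t unfolding lifts_invertible2_def by (meson A.src2_in_Hom)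
  obtain s1 where s1: "invertible2 A s1" "tgt2 A s1 = tgt2 A c" "Fc F s1 = t1"
    using inv c t unfolding lifts_invertible2_def by (meson A.tgt2_in_Hom)
  let ?a = "vcomp A (inv2 A s1) (vcomp A c s0)"
  have "Fc F ?a = vcomp B (inv2 B t1) (vcomp B t1 b)" using s0 s1 c t by simp
  also have "\<dots> = vcomp B (vcomp B (inv2 B t1) t1) b" by (rule B.vcomp_assoc) (use t in auto)
  also have "\<dots> = b" using t by simp
  finally have Fa: "Fc F ?a = b" .
  have "vcomp A s1 ?a = vcomp A (vcomp A s1 (inv2 A s1)) (vcomp A c s0)"
    by (rule A.vcomp_assoc) (use s0 s1 c in auto)
  then have "vcomp A c s0 = vcomp A s1 ?a" using s0 s1 c by simp
  moreover have "hdom A (src2 A s0) = hdom A (src2 A c)" "hcod A (src2 A s0) = hcod A (src2 A c)"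
    using s0 by (metis A.hdom_tgt2 A.hcod_tgt2 A.invertible2_in_Cell)+
  ultimately have "invertible2 (VV (HD A)) (?a, s0, s1, c)"
    using s0 s1 c by (auto simp: A.invertible2_VV_HD_iff)
  then show "\<exists>p. invertible2 (VV (HD A)) p \<and> tgt2 (VV (HD A)) p = c \<and> Fc (VVf (HDf F)) p = q"
    unfolding qq using Fa s0 s1 by (intro exI[where x="(?a, s0, s1, c)"]) simp
qed

lemma lack_fibration_VV_HD:
  "lack_fibration A B F \<Longrightarrow> lack_fibration (VV (HD A)) (VV (HD B)) (VVf (HDf F))"
  by (simp add: lack_fibration_iff lifts_equivalences_VV_HD lifts_invertible2_VV_HD)

end

theorem theorem6p7:
  fixes A :: "('o,'m,'c) twocat" and B :: "('p,'n,'d) twocat"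
    and F :: "('o,'m,'c,'p,'n,'d) twofun"
  assumes "is_2cat A" and "is_2cat B" and "is_2functor A B F"
  shows "(biequivalence A B F \<longleftrightarrow> double_biequivalence (HD A) (HD B) (HDf F))
       \<and> (lack_fibration A B F \<longleftrightarrow> double_fibration (HD A) (HD B) (HDf F))"
proof -
  interpret two_functor A B F using assms by (rule two_functor_if_is_2functor)
  show ?thesis
    unfolding double_biequivalence_def double_fibration_def HH_HD HHf_HDf
    using biequivalence_VV_HD lack_fibration_VV_HD by blast
qed

end
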